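(* Let $G=(V,E)$ be a finite graph and let $\mu$ be a Bernoulli bond percolation measure on $\Omega=\{0,1\}^E$. Let $C_1,C_2$ be independent random configurations, each with law $\mu$. Consider an adaptive procedure (decision tree) $T$ which, at each step, based on the values of $C_1$ and $C_2$ on the edges revealed so far, chooses a not-yet-revealed edge $e$ and decides whether $e$ belongs to a set $S$ or to its complement $\overline S=E\setminus S$, and then reveals $C_1(e)$ and $C_2(e)$; this continues until every edge has been revealed. Let $S=S(C_1,C_2)\subseteq E$ be the resulting (random) set. Then $C_1\to_S C_2$ and $C_2\to_S C_1=C_1\to_{\overline S}C_2$ are independent, and each of them has law $\mu$.
   Context: A Bernoulli bond percolation measure $\mu$ on $\{0,1\}^E$ is a product measure in which each edge $e$ is open (value $1$) independently with probability $p_e\in[0,1]$. For configurations $C,C'\in\{0,1\}^E$ and $S\subseteq E$, $C\to_S C'$ denotes the configuration that coincides with $C$ on $S$ and with $C'$ on $\overline S=E\setminus S$. *)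

theory Defs
  imports "HOL-Probability.Probability"
begin

text \<open>Configurations are functions 'e => bool (True = open).\<close>

definition bernoulli_percolation :: "'e set \<Rightarrow> ('e \<Rightarrow> real) \<Rightarrow> ('e \<Rightarrow> bool) pmf" where
  "bernoulli_percolation E p = Pi_pmf E False (\<lambda>e. bernoulli_pmf (p e))"

definition switch_conf :: "('e \<Rightarrow> bool) \<Rightarrow> 'e set \<Rightarrow> ('e \<Rightarrow> bool) \<Rightarrow> ('e \<Rightarrow> bool)" where
  "switch_conf C S C' = (\<lambda>e. if e \<in> S then C e else C' e)"

text \<open>Decision trees: a node queries edge e, puts e into S iff the flag is True,
then reveals C1 e and C2 e and continues with the subtree selected by these two values.\<close>
datatype 'e dtree = Leaf | Node 'e bool "bool \<Rightarrow> bool \<Rightarrow> 'e dtree"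

primrec valid_tree :: "'e set \<Rightarrow> 'e dtree \<Rightarrow> bool" where
  "valid_tree R Leaf = (R = {})"
| "valid_tree R (Node e b k) = (e \<in> R \<and> (\<forall>x y. valid_tree (R - {e}) (k x y)))"

primrec selected_set :: "'e dtree \<Rightarrow> ('e \<Rightarrow> bool) \<Rightarrow> ('e \<Rightarrow> bool) \<Rightarrow> 'e set" where
  "selected_set Leaf C1 C2 = {}"
| "selected_set (Node e b k) C1 C2 =
     (if b then {e} else {}) \<union> selected_set (k (C1 e) (C2 e)) C1 C2"

end

theory Submission
  imports Defs
begin

text \<open>Encode (C1, C2) as one configuration Z with values in bool \<times> bool. Its law is the
product over E of the laws of (C1 e, C2 e), each invariant under swapping the two coordinates,
and the switched pair encodes Z with the coordinates swapped at every edge outside S. The tree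
decides about the queried edge from values on already revealed edges only, so conditioning on
the value y at the first queried edge reduces the claim to the subtree on the remaining edges:
the queried edge receives y or its swap, both with the law of y, and induction on the tree
handles the rest.\<close>

definition unzip_fun :: "('e \<Rightarrow> 'a \<times> 'b) \<Rightarrow> ('e \<Rightarrow> 'a) \<times> ('e \<Rightarrow> 'b)" where
  "unzip_fun Z = (fst \<circ> Z, snd \<circ> Z)"

lemma bij_unzip_fun: "bij unzip_fun"
  by (rule bij_betwI[where g = "\<lambda>(f, g) e. (f e, g e)"])
     (auto simp: unzip_fun_def fun_eq_iff)

lemma map_pmf_unzip_fun_Pi_pmf_pair_pmf:
  assumes "finite A"
  shows "map_pmf unzip_fun (Pi_pmf A (d1, d2) (\<lambda>e. pair_pmf (P e) (Q e)))
       = pair_pmf (Pi_pmf A d1 P) (Pi_pmf A d2 Q)"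
proof (rule pmf_eqI)
  fix fg :: "('a \<Rightarrow> 'b) \<times> ('a \<Rightarrow> 'c)"
  obtain Z where fg: "fg = unzip_fun Z"
    using bij_unzip_fun by (metis bij_pointE)
  have "pmf (map_pmf unzip_fun (Pi_pmf A (d1, d2) (\<lambda>e. pair_pmf (P e) (Q e)))) fg
      = pmf (Pi_pmf A (d1, d2) (\<lambda>e. pair_pmf (P e) (Q e))) Z"
    by (simp add: fg pmf_map_inj' bij_is_inj[OF bij_unzip_fun])
  also have "\<dots> = pmf (pair_pmf (Pi_pmf A d1 P) (Pi_pmf A d2 Q)) fg"
    using assms pmf_pair[of "P e" "Q e" "fst (Z e)" "snd (Z e)" for e]
    by (auto simp: fg unzip_fun_def pmf_Pi pmf_pair prod.distrib prod_eq_iff)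
  finally show "pmf (map_pmf unzip_fun (Pi_pmf A (d1, d2) (\<lambda>e. pair_pmf (P e) (Q e)))) fg
      = pmf (pair_pmf (Pi_pmf A d1 P) (Pi_pmf A d2 Q)) fg" .
qed

lemma map_pmf_swap_pair_pmf: "map_pmf prod.swap (pair_pmf M N) = pair_pmf N M"
  unfolding pair_commute_pmf[of N M] by (rule map_pmf_cong) auto

lemma selected_set_subset: "valid_tree R t \<Longrightarrow> selected_set t C1 C2 \<subseteq> R"
proof (induction t arbitrary: R)
  case (Node e b k)
  have "selected_set (k (C1 e) (C2 e)) C1 C2 \<subseteq> R - {e}"
    using Node.prems by (intro Node.IH[OF rangeI rangeI]) simp
  with Node.prems show ?case
    by auto
qed simp

lemma selected_set_cong:
  assumes "valid_tree R t" and "\<And>e. e \<in> R \<Longrightarrow> C1 e = D1 e \<and> C2 e = D2 e"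
  shows "selected_set t C1 C2 = selected_set t D1 D2"
  using assms
proof (induction t arbitrary: R)
  case (Node e b k)
  then have "C1 e = D1 e" "C2 e = D2 e"
    by auto
  moreover have "selected_set (k (C1 e) (C2 e)) C1 C2 = selected_set (k (C1 e) (C2 e)) D1 D2"
    using Node by (intro Node.IH[of _ _ "R - {e}"]) auto
  ultimately show ?case
    by simp
qed simp

definition adaptive_swap :: "'e dtree \<Rightarrow> ('e \<Rightarrow> bool \<times> bool) \<Rightarrow> ('e \<Rightarrow> bool \<times> bool)" where
  "adaptive_swap t Z =
     (\<lambda>e. if e \<in> selected_set t (fst \<circ> Z) (snd \<circ> Z) then Z e else prod.swap (Z e))"

lemma adaptive_swap_Node_fun_upd:
  assumes "valid_tree R (k (fst y) (snd y))" and "e \<notin> R"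
  shows "adaptive_swap (Node e b k) (Z(e := y))
       = (adaptive_swap (k (fst y) (snd y)) Z)(e := (if b then y else prod.swap y))"
proof -
  let ?t = "k (fst y) (snd y)"
  have "selected_set ?t (fst \<circ> Z(e := y)) (snd \<circ> Z(e := y))
      = selected_set ?t (fst \<circ> Z) (snd \<circ> Z)"
    using assms by (intro selected_set_cong[of R]) auto
  moreover have "e \<notin> selected_set ?t (fst \<circ> Z) (snd \<circ> Z)"
    using selected_set_subset[OF assms(1)] assms(2) by blast
  ultimately show ?thesis
    by (auto simp: adaptive_swap_def fun_eq_iff)
qed

lemma map_pmf_adaptive_swap_Pi_pmf:
  assumes "finite R" and "valid_tree R t"
    and "prod.swap d = d" and "\<And>e. map_pmf prod.swap (Q e) = Q e"
  shows "map_pmf (adaptive_swap t) (Pi_pmf R d Q) = Pi_pmf R d Q"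
  using assms(1,2)
proof (induction t arbitrary: R)
  case Leaf
  then show ?case
    using assms(3) by (simp add: adaptive_swap_def)
next
  case (Node e b k)
  define R' where "R' = R - {e}"
  define act :: "bool \<times> bool \<Rightarrow> bool \<times> bool" where "act = (if b then id else prod.swap)"
  have R: "R = insert e R'" "e \<notin> R'" "finite R'" and valid: "valid_tree R' (k x y)" for x y
    using Node.prems by (auto simp: R'_def)
  have IH: "map_pmf (adaptive_swap (k x y)) (Pi_pmf R' d Q) = Pi_pmf R' d Q" for x y
    using Node.IH[OF rangeI rangeI R(3) valid] .
  have act_law: "map_pmf act (Q e) = Q e"
    using assms(4) by (simp add: act_def)
  have "map_pmf (adaptive_swap (Node e b k)) (Pi_pmf R d Q)
      = do {y \<leftarrow> Q e; map_pmf (\<lambda>Z. adaptive_swap (Node e b k) (Z(e := y))) (Pi_pmf R' d Q)}"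
    by (simp add: R Pi_pmf_insert' map_bind_pmf map_pmf_def[symmetric] map_pmf_comp)
  also have "\<dots> = do {y \<leftarrow> Q e; map_pmf (\<lambda>Z. Z(e := act y))
                        (map_pmf (adaptive_swap (k (fst y) (snd y))) (Pi_pmf R' d Q))}"
    using R(2) by (simp add: adaptive_swap_Node_fun_upd[OF valid] act_def map_pmf_comp)
  also have "\<dots> = do {y \<leftarrow> map_pmf act (Q e); map_pmf (\<lambda>Z. Z(e := y)) (Pi_pmf R' d Q)}"
    by (simp add: IH bind_map_pmf)
  also have "\<dots> = Pi_pmf R d Q"
    unfolding act_law by (simp add: R Pi_pmf_insert' map_pmf_def)
  finally show ?case .
qed

lemma switch_conf_unzip_fun_adaptive_swap:
  "(\<lambda>(C1, C2). let S = selected_set t C1 C2 in (switch_conf C1 S C2, switch_conf C2 S C1))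
     (unzip_fun Z)
   = unzip_fun (adaptive_swap t Z)"
  by (auto simp: fun_eq_iff unzip_fun_def adaptive_swap_def switch_conf_def Let_def)

lemma switch_conf_swap_eq_complement:
  assumes "S \<subseteq> E" and "\<And>e. e \<notin> E \<Longrightarrow> C1 e = C2 e"
  shows "switch_conf C2 S C1 = switch_conf C1 (E - S) C2"
  using assms by (auto simp: switch_conf_def fun_eq_iff)

theorem mainTheorem5:
  fixes E :: "'e set" and p :: "'e \<Rightarrow> real" and T :: "'e dtree"
  assumes "finite E"
    and "\<And>e. e \<in> E \<Longrightarrow> 0 \<le> p e \<and> p e \<le> 1"
    and "valid_tree E T"
  shows "map_pmf (\<lambda>(C1, C2). let S = selected_set T C1 C2 in
                     (switch_conf C1 S C2, switch_conf C2 S C1))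
           (pair_pmf (bernoulli_percolation E p) (bernoulli_percolation E p))
         = pair_pmf (bernoulli_percolation E p) (bernoulli_percolation E p)
       \<and> (\<forall>C1 \<in> set_pmf (bernoulli_percolation E p). \<forall>C2 \<in> set_pmf (bernoulli_percolation E p).
            switch_conf C2 (selected_set T C1 C2) C1 = switch_conf C1 (E - selected_set T C1 C2) C2)"
proof
  define Q where "Q = (\<lambda>e. pair_pmf (bernoulli_pmf (p e)) (bernoulli_pmf (p e)))"
  let ?B = "bernoulli_percolation E p"
  let ?switch = "\<lambda>(C1, C2). let S = selected_set T C1 C2 in
                   (switch_conf C1 S C2, switch_conf C2 S C1)"
  have pair: "pair_pmf ?B ?B = map_pmf unzip_fun (Pi_pmf E (False, False) Q)"
    using assms(1)
    by (simp add: bernoulli_percolation_def Q_def map_pmf_unzip_fun_Pi_pmf_pair_pmf)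
  have "map_pmf prod.swap (Q e) = Q e" for e
    unfolding Q_def by (rule map_pmf_swap_pair_pmf)
  then have invariant:
    "map_pmf (adaptive_swap T) (Pi_pmf E (False, False) Q) = Pi_pmf E (False, False) Q"
    using assms(1,3) by (intro map_pmf_adaptive_swap_Pi_pmf) auto
  have "map_pmf ?switch (pair_pmf ?B ?B)
      = map_pmf (\<lambda>Z. unzip_fun (adaptive_swap T Z)) (Pi_pmf E (False, False) Q)"
    by (simp add: pair map_pmf_comp switch_conf_unzip_fun_adaptive_swap)
  also have "\<dots> = pair_pmf ?B ?B"
    by (simp add: pair invariant flip: map_pmf_comp)
  finally show "map_pmf ?switch (pair_pmf ?B ?B) = pair_pmf ?B ?B" .
next
  have "C \<in> set_pmf (bernoulli_percolation E p) \<Longrightarrow> e \<notin> E \<Longrightarrow> \<not> C e" for C e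
    using set_Pi_pmf_subset[OF assms(1)] by (fastforce simp: bernoulli_percolation_def)
  then show "\<forall>C1 \<in> set_pmf (bernoulli_percolation E p). \<forall>C2 \<in> set_pmf (bernoulli_percolation E p).
      switch_conf C2 (selected_set T C1 C2) C1 = switch_conf C1 (E - selected_set T C1 C2) C2"
    using selected_set_subset[OF assms(3)] by (blast intro: switch_conf_swap_eq_complement)
qed

end
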